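(* Let $\partial:G_1\to G_0$ be a crossed module. Then there is an exact sequence of groups $$1\to \mathrm{Der}(\pi_0(\mathbf G_* ),\pi_1(\mathbf G_* ))\to \mathbf Z_0(\mathbf G_* )\xrightarrow{\mathsf z_0} G_0,$$ where the first map sends a crossed homomorphism $\phi$ to $(1,\tilde\phi)$, with $\tilde\phi$ the composite $G_0\to\pi_0(\mathbf G_* )\xrightarrow{\phi}\pi_1(\mathbf G_* )\hookrightarrow G_1$, and $\mathsf z_0(x,\xi)=x$.
   Context: A crossed module $\mathbf G_*$ consists of groups $G_1,G_0$, a group homomorphism $\partial:G_1\to G_0$ and a left action of $G_0$ on $G_1$ by group automorphisms, $(x,a)\mapsto {}^x a$, such that $\partial({}^x a)=x\,\partial(a)\,x^{-1}$ and ${}^{\partial(b)}a=bab^{-1}$ for all $x\in G_0$, $a,b\in G_1$. $\pi_0(\mathbf G_* )=G_0/\mathrm{Im}(\partial)$ (a group) and $\pi_1(\mathbf G_* )=\ker(\partial)$, a central subgroup of $G_1$ which is a $\pi_0(\mathbf G_* )$-module via the induced action. $\mathrm{Der}(P,M)$ denotes the group of crossed homomorphisms (1-cocycles) $\phi:P\to M$, $\phi(pq)=\phi(p)+p\cdot\phi(q)$, under pointwise addition. Commutators are $[x,t]=xtx^{-1}t^{-1}$. The set $\mathbf Z_0(\mathbf G_* )$ consists of all pairs $(x,\xi)$ with $x\in G_0$ and $\xi:G_0\to G_1$ a map such that for all $s,t\in G_0$, $a\in G_1$: (Z1) $\partial\xi(t)=[x,t]$; (Z2) $\xi(\partial a)={}^x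 a\cdot a^{-1}$; (Z3) $\xi(st)=\xi(s)\,{}^s\xi(t)$. It is a group under $(x,\xi)\cdot(y,\eta)=(xy,\ t\mapsto {}^x\eta(t)\,\xi(t))$. *)

theory Defs
  imports "HOL-Algebra.Algebra"
begin

definition crossed_module ::
  "'a monoid \<Rightarrow> 'b monoid \<Rightarrow> ('a \<Rightarrow> 'b) \<Rightarrow> ('b \<Rightarrow> 'a \<Rightarrow> 'a) \<Rightarrow> bool" where
  "crossed_module G1 G0 d act \<longleftrightarrow>
     group G1 \<and> group G0 \<and> d \<in> hom G1 G0 \<and>
     (\<forall>x\<in>carrier G0. act x \<in> iso G1 G1) \<and>
     (\<forall>a\<in>carrier G1. act \<one>\<^bsub>G0\<^esub> a = a) \<and>
     (\<forall>x\<in>carrier G0. \<forall>y\<in>carrier G0. \<forall>a\<in>carrier G1.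
        act (x \<otimes>\<^bsub>G0\<^esub> y) a = act x (act y a)) \<and>
     (\<forall>x\<in>carrier G0. \<forall>a\<in>carrier G1.
        d (act x a) = x \<otimes>\<^bsub>G0\<^esub> d a \<otimes>\<^bsub>G0\<^esub> inv\<^bsub>G0\<^esub> x) \<and>
     (\<forall>a\<in>carrier G1. \<forall>b\<in>carrier G1.
        act (d b) a = b \<otimes>\<^bsub>G1\<^esub> a \<otimes>\<^bsub>G1\<^esub> inv\<^bsub>G1\<^esub> b)"

definition pi0 :: "'a monoid \<Rightarrow> 'b monoid \<Rightarrow> ('a \<Rightarrow> 'b) \<Rightarrow> 'b set monoid" where
  "pi0 G1 G0 d = G0 Mod (d ` carrier G1)"

definition pi1 :: "'a monoid \<Rightarrow> 'b monoid \<Rightarrow> ('a \<Rightarrow> 'b) \<Rightarrow> 'a set" where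
  "pi1 G1 G0 d = kernel G1 G0 d"

definition pi0_act :: "('b \<Rightarrow> 'a \<Rightarrow> 'a) \<Rightarrow> 'b set \<Rightarrow> 'a \<Rightarrow> 'a" where
  "pi0_act act C m = act (SOME x. x \<in> C) m"

text \<open>Der(pi_0, pi_1): crossed homomorphisms, with pointwise group law
(the group law of pi_1 is the one of G1, written additively in the paper).\<close>
definition Der :: "'a monoid \<Rightarrow> 'b monoid \<Rightarrow> ('a \<Rightarrow> 'b) \<Rightarrow> ('b \<Rightarrow> 'a \<Rightarrow> 'a)
    \<Rightarrow> ('b set \<Rightarrow> 'a) monoid" where
  "Der G1 G0 d act =
     \<lparr> carrier = {\<phi>. \<phi> \<in> carrier (pi0 G1 G0 d) \<rightarrow> pi1 G1 G0 d \<and>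
                     \<phi> \<in> extensional (carrier (pi0 G1 G0 d)) \<and>
                     (\<forall>p\<in>carrier (pi0 G1 G0 d). \<forall>q\<in>carrier (pi0 G1 G0 d).
                        \<phi> (p \<otimes>\<^bsub>pi0 G1 G0 d\<^esub> q) = \<phi> p \<otimes>\<^bsub>G1\<^esub> pi0_act act p (\<phi> q))},
       monoid.mult = (\<lambda>\<phi> \<psi>. \<lambda>p\<in>carrier (pi0 G1 G0 d). \<phi> p \<otimes>\<^bsub>G1\<^esub> \<psi> p),
       monoid.one = (\<lambda>p\<in>carrier (pi0 G1 G0 d). \<one>\<^bsub>G1\<^esub>) \<rparr>"

definition Z0 :: "'a monoid \<Rightarrow> 'b monoid \<Rightarrow> ('a \<Rightarrow> 'b) \<Rightarrow> ('b \<Rightarrow> 'a \<Rightarrow> 'a)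
    \<Rightarrow> ('b \<times> ('b \<Rightarrow> 'a)) monoid" where
  "Z0 G1 G0 d act =
     \<lparr> carrier = {(x, \<xi>). x \<in> carrier G0 \<and> \<xi> \<in> carrier G0 \<rightarrow> carrier G1 \<and>
                   \<xi> \<in> extensional (carrier G0) \<and>
                   (\<forall>t\<in>carrier G0. d (\<xi> t) =
                      x \<otimes>\<^bsub>G0\<^esub> t \<otimes>\<^bsub>G0\<^esub> inv\<^bsub>G0\<^esub> x \<otimes>\<^bsub>G0\<^esub> inv\<^bsub>G0\<^esub> t) \<and>
                   (\<forall>a\<in>carrier G1. \<xi> (d a) = act x a \<otimes>\<^bsub>G1\<^esub> inv\<^bsub>G1\<^esub> a) \<and>
                   (\<forall>s\<in>carrier G0. \<forall>t\<in>carrier G0.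
                      \<xi> (s \<otimes>\<^bsub>G0\<^esub> t) = \<xi> s \<otimes>\<^bsub>G1\<^esub> act s (\<xi> t))},
       monoid.mult = (\<lambda>(x, \<xi>) (y, \<eta>). (x \<otimes>\<^bsub>G0\<^esub> y,
                  \<lambda>t\<in>carrier G0. act x (\<eta> t) \<otimes>\<^bsub>G1\<^esub> \<xi> t)),
       monoid.one = (\<one>\<^bsub>G0\<^esub>, \<lambda>t\<in>carrier G0. \<one>\<^bsub>G1\<^esub>) \<rparr>"

definition der_to_Z0 :: "'a monoid \<Rightarrow> 'b monoid \<Rightarrow> ('a \<Rightarrow> 'b)
    \<Rightarrow> ('b set \<Rightarrow> 'a) \<Rightarrow> 'b \<times> ('b \<Rightarrow> 'a)" where
  "der_to_Z0 G1 G0 d \<phi> =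
     (\<one>\<^bsub>G0\<^esub>, \<lambda>t\<in>carrier G0. \<phi> ((d ` carrier G1) #>\<^bsub>G0\<^esub> t))"

definition z0 :: "'b \<times> ('b \<Rightarrow> 'a) \<Rightarrow> 'b" where
  "z0 p = fst p"

end

theory Submission imports Defs begin

text \<open>An element \<open>(\<one>, \<xi>)\<close> of the kernel of \<open>z0\<close> has \<open>\<xi>\<close> valued in \<open>ker d\<close> by (Z1) and
  trivial on \<open>Im d\<close> by (Z2); as \<open>Im d\<close> acts trivially on \<open>ker d\<close>, (Z3) then makes \<open>\<xi>\<close>
  constant on the cosets of \<open>Im d\<close>, so that \<open>\<xi>\<close> is precisely a crossed homomorphism
  \<open>\<pi>\<^sub>0 \<rightarrow> \<pi>\<^sub>1\<close> pulled back to \<open>G0\<close>. This identifies \<open>Der\<close> with the kernel of \<open>z0\<close>,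
  compatibly with the products because \<open>ker d\<close> is central in \<open>G1\<close>; in particular
  \<open>Der\<close> inherits its group structure from \<open>Z0\<close>.\<close>

lemma (in group) inv_m_cancel [simp]:
  "x \<in> carrier G \<Longrightarrow> y \<in> carrier G \<Longrightarrow> inv x \<otimes> (x \<otimes> y) = y"
  by (simp add: m_assoc[symmetric])

lemma (in group) some_rcos_rep:
  assumes "subgroup H G" "t \<in> carrier G"
  obtains h where "h \<in> H" "(SOME y. y \<in> H #> t) = h \<otimes> t"
proof -
  have "(SOME y. y \<in> H #> t) \<in> H #> t"
    using rcos_self[OF assms(2,1)] by (rule someI)
  then show ?thesis using that unfolding r_coset_def by blast
qed

lemma group_if_inj_onto_subgroup:
  assumes H: "group H" and S: "subgroup S H"
    and inj: "inj_on f A" and carrier: "carrier G \<subseteq> A"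
    and mult_in: "\<And>x y. x \<in> carrier G \<Longrightarrow> y \<in> carrier G \<Longrightarrow> x \<otimes>\<^bsub>G\<^esub> y \<in> A"
    and one_in: "\<one>\<^bsub>G\<^esub> \<in> A"
    and f_mult: "\<And>x y. x \<in> carrier G \<Longrightarrow> y \<in> carrier G \<Longrightarrow>
                   f (x \<otimes>\<^bsub>G\<^esub> y) = f x \<otimes>\<^bsub>H\<^esub> f y"
    and f_one: "f \<one>\<^bsub>G\<^esub> = \<one>\<^bsub>H\<^esub>"
    and image: "f ` carrier G = S"
  shows "group G"
proof -
  interpret H: group H by (fact H)
  have f_closed: "f x \<in> carrier H" if "x \<in> carrier G" for x
    using that image subgroup.subset[OF S] by blast
  have eq: "x = y" if "x \<in> A" "y \<in> A" "f x = f y" for x y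
    using inj that by (simp add: inj_on_def)
  have mult_closed: "x \<otimes>\<^bsub>G\<^esub> y \<in> carrier G" if xy: "x \<in> carrier G" "y \<in> carrier G" for x y
  proof -
    have "f x \<otimes>\<^bsub>H\<^esub> f y \<in> f ` carrier G"
      using xy image subgroup.m_closed[OF S] by blast
    then obtain z where "z \<in> carrier G" "f z = f (x \<otimes>\<^bsub>G\<^esub> y)"
      using f_mult[OF xy] by auto
    then show ?thesis using eq mult_in[OF xy] carrier by (metis subsetD)
  qed
  have one_closed: "\<one>\<^bsub>G\<^esub> \<in> carrier G"
  proof -
    obtain z where "z \<in> carrier G" "f z = f \<one>\<^bsub>G\<^esub>"
      using image subgroup.one_closed[OF S] f_one by (metis imageE)
    then show ?thesis using eq one_in carrier by (metis subsetD)
  qed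
  show ?thesis
  proof (rule groupI)
    fix x y z assume xyz: "x \<in> carrier G" "y \<in> carrier G" "z \<in> carrier G"
    then have "f (x \<otimes>\<^bsub>G\<^esub> y \<otimes>\<^bsub>G\<^esub> z) = f (x \<otimes>\<^bsub>G\<^esub> (y \<otimes>\<^bsub>G\<^esub> z))"
      by (simp add: f_mult mult_closed f_closed H.m_assoc)
    then show "x \<otimes>\<^bsub>G\<^esub> y \<otimes>\<^bsub>G\<^esub> z = x \<otimes>\<^bsub>G\<^esub> (y \<otimes>\<^bsub>G\<^esub> z)"
      using eq mult_in mult_closed xyz by simp
  next
    fix x assume x: "x \<in> carrier G"
    then have "f (\<one>\<^bsub>G\<^esub> \<otimes>\<^bsub>G\<^esub> x) = f x"
      by (simp add: f_mult one_closed f_one f_closed)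
    then show "\<one>\<^bsub>G\<^esub> \<otimes>\<^bsub>G\<^esub> x = x"
      using eq mult_in one_closed x carrier by blast
  next
    fix x assume x: "x \<in> carrier G"
    obtain y where y: "y \<in> carrier G" "f y = inv\<^bsub>H\<^esub> f x"
      using image subgroup.m_inv_closed[OF S] x by (metis imageE imageI)
    then have "f (y \<otimes>\<^bsub>G\<^esub> x) = f \<one>\<^bsub>G\<^esub>"
      using x by (simp add: f_mult f_one f_closed)
    then show "\<exists>y\<in>carrier G. y \<otimes>\<^bsub>G\<^esub> x = \<one>\<^bsub>G\<^esub>"
      using eq mult_in one_in x y by blast
  qed (fact mult_closed one_closed)+
qed

locale xmod = G1: group G1 + G0: group G0
  for G1 :: "'a monoid" and G0 :: "'b monoid" +
  fixes d :: "'a \<Rightarrow> 'b" and act :: "'b \<Rightarrow> 'a \<Rightarrow> 'a"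
  assumes d_hom: "d \<in> hom G1 G0"
    and act_iso: "x \<in> carrier G0 \<Longrightarrow> act x \<in> iso G1 G1"
    and act_one_left: "a \<in> carrier G1 \<Longrightarrow> act \<one>\<^bsub>G0\<^esub> a = a"
    and act_act: "x \<in> carrier G0 \<Longrightarrow> y \<in> carrier G0 \<Longrightarrow> a \<in> carrier G1 \<Longrightarrow>
        act (x \<otimes>\<^bsub>G0\<^esub> y) a = act x (act y a)"
    and d_act: "x \<in> carrier G0 \<Longrightarrow> a \<in> carrier G1 \<Longrightarrow>
        d (act x a) = x \<otimes>\<^bsub>G0\<^esub> d a \<otimes>\<^bsub>G0\<^esub> inv\<^bsub>G0\<^esub> x"
    and act_d: "a \<in> carrier G1 \<Longrightarrow> b \<in> carrier G1 \<Longrightarrow>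
        act (d b) a = b \<otimes>\<^bsub>G1\<^esub> a \<otimes>\<^bsub>G1\<^esub> inv\<^bsub>G1\<^esub> b"

lemma crossed_module_imp_xmod: "crossed_module G1 G0 d act \<Longrightarrow> xmod G1 G0 d act"
  unfolding crossed_module_def xmod_def xmod_axioms_def by blast

context xmod begin

lemma act_group_hom: "x \<in> carrier G0 \<Longrightarrow> group_hom G1 G1 (act x)"
  using act_iso by (simp add: group_hom_def group_hom_axioms_def iso_def G1.is_group)

lemma act_closed [simp]: "x \<in> carrier G0 \<Longrightarrow> a \<in> carrier G1 \<Longrightarrow> act x a \<in> carrier G1"
  using group_hom.hom_closed[OF act_group_hom] by blast

lemma act_mult: "x \<in> carrier G0 \<Longrightarrow> a \<in> carrier G1 \<Longrightarrow> b \<in> carrier G1 \<Longrightarrow>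
    act x (a \<otimes>\<^bsub>G1\<^esub> b) = act x a \<otimes>\<^bsub>G1\<^esub> act x b"
  using group_hom.hom_mult[OF act_group_hom] by blast

lemma act_one [simp]: "x \<in> carrier G0 \<Longrightarrow> act x \<one>\<^bsub>G1\<^esub> = \<one>\<^bsub>G1\<^esub>"
  using group_hom.hom_one[OF act_group_hom] by blast

lemma act_inv: "x \<in> carrier G0 \<Longrightarrow> a \<in> carrier G1 \<Longrightarrow>
    act x (inv\<^bsub>G1\<^esub> a) = inv\<^bsub>G1\<^esub> (act x a)"
  using group_hom.hom_inv[OF act_group_hom] by blast

lemma act_inv_act [simp]: "x \<in> carrier G0 \<Longrightarrow> a \<in> carrier G1 \<Longrightarrow>
    act (inv\<^bsub>G0\<^esub> x) (act x a) = a"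
  by (simp add: act_act[symmetric] act_one_left)

lemma d_group_hom: "group_hom G1 G0 d"
  using d_hom by (simp add: group_hom_def group_hom_axioms_def G1.is_group G0.is_group)

lemma d_closed [simp]: "a \<in> carrier G1 \<Longrightarrow> d a \<in> carrier G0"
  using group_hom.hom_closed[OF d_group_hom] by blast

lemma d_mult: "a \<in> carrier G1 \<Longrightarrow> b \<in> carrier G1 \<Longrightarrow> d (a \<otimes>\<^bsub>G1\<^esub> b) = d a \<otimes>\<^bsub>G0\<^esub> d b"
  using group_hom.hom_mult[OF d_group_hom] by blast

lemma d_one [simp]: "d \<one>\<^bsub>G1\<^esub> = \<one>\<^bsub>G0\<^esub>"
  using group_hom.hom_one[OF d_group_hom] .

lemma d_inv: "a \<in> carrier G1 \<Longrightarrow> d (inv\<^bsub>G1\<^esub> a) = inv\<^bsub>G0\<^esub> (d a)"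
  using group_hom.hom_inv[OF d_group_hom] by blast

abbreviation Ker_d :: "'a set" where "Ker_d \<equiv> kernel G1 G0 d"
abbreviation Im_d :: "'b set" where "Im_d \<equiv> d ` carrier G1"

lemma Ker_d_iff: "k \<in> Ker_d \<longleftrightarrow> k \<in> carrier G1 \<and> d k = \<one>\<^bsub>G0\<^esub>"
  by (simp add: kernel_def)

lemma Ker_d_closed [simp]: "k \<in> Ker_d \<Longrightarrow> k \<in> carrier G1"
  by (simp add: kernel_def)

lemma Ker_d_central:
  assumes k: "k \<in> Ker_d" and a: "a \<in> carrier G1"
  shows "a \<otimes>\<^bsub>G1\<^esub> k = k \<otimes>\<^bsub>G1\<^esub> a"
proof -
  have "a = k \<otimes>\<^bsub>G1\<^esub> a \<otimes>\<^bsub>G1\<^esub> inv\<^bsub>G1\<^esub> k"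
    using act_d[OF a, of k] k a by (simp add: Ker_d_iff act_one_left)
  then show ?thesis using k a by (metis G1.inv_solve_right G1.m_closed Ker_d_closed)
qed

lemma act_Ker_d: "x \<in> carrier G0 \<Longrightarrow> k \<in> Ker_d \<Longrightarrow> act x k \<in> Ker_d"
  by (simp add: Ker_d_iff d_act)

lemma act_d_Ker_d: "a \<in> carrier G1 \<Longrightarrow> k \<in> Ker_d \<Longrightarrow> act (d a) k = k"
  using act_d[of k a] Ker_d_central[of k a] by (simp add: G1.m_assoc)

lemma Im_d_normal: "Im_d \<lhd> G0"
proof -
  have "subgroup Im_d G0" using group_hom.img_is_subgroup[OF d_group_hom] .
  moreover have "x \<otimes>\<^bsub>G0\<^esub> h \<otimes>\<^bsub>G0\<^esub> inv\<^bsub>G0\<^esub> x \<in> Im_d"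
    if "x \<in> carrier G0" "h \<in> Im_d" for x h
    using that d_act by (metis act_closed imageE imageI)
  ultimately show ?thesis by (simp add: G0.normal_inv_iff)
qed

lemma Im_d_subgroup: "subgroup Im_d G0"
  using Im_d_normal normal_imp_subgroup by blast

lemma rcos_d: "a \<in> carrier G1 \<Longrightarrow> Im_d #>\<^bsub>G0\<^esub> d a = Im_d"
  using G0.coset_join2[OF _ Im_d_subgroup] by simp

abbreviation Pi0 :: "'b set monoid" where "Pi0 \<equiv> pi0 G1 G0 d"

lemma carrier_Pi0: "carrier Pi0 = (\<lambda>t. Im_d #>\<^bsub>G0\<^esub> t) ` carrier G0"
  by (simp add: pi0_def carrier_FactGroup)

lemma rcos_in_Pi0 [simp]: "t \<in> carrier G0 \<Longrightarrow> Im_d #>\<^bsub>G0\<^esub> t \<in> carrier Pi0"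
  by (simp add: carrier_Pi0)

lemma Pi0_mult_rcos: "s \<in> carrier G0 \<Longrightarrow> t \<in> carrier G0 \<Longrightarrow>
    (Im_d #>\<^bsub>G0\<^esub> s) \<otimes>\<^bsub>Pi0\<^esub> (Im_d #>\<^bsub>G0\<^esub> t) = Im_d #>\<^bsub>G0\<^esub> (s \<otimes>\<^bsub>G0\<^esub> t)"
  by (simp add: pi0_def normal.rcos_sum[OF Im_d_normal])

lemma pi0_act_rcos:
  assumes s: "s \<in> carrier G0" and k: "k \<in> Ker_d"
  shows "pi0_act act (Im_d #>\<^bsub>G0\<^esub> s) k = act s k"
proof -
  obtain h where h: "h \<in> Im_d" "(SOME y. y \<in> Im_d #>\<^bsub>G0\<^esub> s) = h \<otimes>\<^bsub>G0\<^esub> s"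
    using G0.some_rcos_rep[OF Im_d_subgroup s] .
  then show ?thesis
    using s k by (auto simp: pi0_act_def act_act act_d_Ker_d act_Ker_d)
qed

abbreviation D :: "('b set \<Rightarrow> 'a) monoid" where "D \<equiv> Der G1 G0 d act"

lemma carrier_Der_iff: "\<phi> \<in> carrier D \<longleftrightarrow>
    \<phi> \<in> carrier Pi0 \<rightarrow> Ker_d \<and> \<phi> \<in> extensional (carrier Pi0) \<and>
    (\<forall>s\<in>carrier G0. \<forall>t\<in>carrier G0. \<phi> (Im_d #>\<^bsub>G0\<^esub> (s \<otimes>\<^bsub>G0\<^esub> t)) =
       \<phi> (Im_d #>\<^bsub>G0\<^esub> s) \<otimes>\<^bsub>G1\<^esub> act s (\<phi> (Im_d #>\<^bsub>G0\<^esub> t)))"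
proof -
  have "(\<forall>p\<in>carrier Pi0. \<forall>q\<in>carrier Pi0.
           \<phi> (p \<otimes>\<^bsub>Pi0\<^esub> q) = \<phi> p \<otimes>\<^bsub>G1\<^esub> pi0_act act p (\<phi> q)) \<longleftrightarrow>
        (\<forall>s\<in>carrier G0. \<forall>t\<in>carrier G0. \<phi> (Im_d #>\<^bsub>G0\<^esub> (s \<otimes>\<^bsub>G0\<^esub> t)) =
           \<phi> (Im_d #>\<^bsub>G0\<^esub> s) \<otimes>\<^bsub>G1\<^esub> act s (\<phi> (Im_d #>\<^bsub>G0\<^esub> t)))"
    if "\<phi> \<in> carrier Pi0 \<rightarrow> Ker_d"
  proof -
    have "\<phi> (Im_d #>\<^bsub>G0\<^esub> t) \<in> Ker_d" if "t \<in> carrier G0" for t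
      using \<open>\<phi> \<in> carrier Pi0 \<rightarrow> Ker_d\<close> that by auto
    then show ?thesis by (auto simp: carrier_Pi0 Pi0_mult_rcos pi0_act_rcos)
  qed
  then show ?thesis by (auto simp: Der_def pi1_def)
qed

lemma Der_in_Ker_d: "\<phi> \<in> carrier D \<Longrightarrow> t \<in> carrier G0 \<Longrightarrow> \<phi> (Im_d #>\<^bsub>G0\<^esub> t) \<in> Ker_d"
  by (auto simp: carrier_Der_iff)

lemma Der_extensional: "\<phi> \<in> carrier D \<Longrightarrow> \<phi> \<in> extensional (carrier Pi0)"
  by (simp add: carrier_Der_iff)

lemma Der_cocycle: "\<phi> \<in> carrier D \<Longrightarrow> s \<in> carrier G0 \<Longrightarrow> t \<in> carrier G0 \<Longrightarrow>
    \<phi> (Im_d #>\<^bsub>G0\<^esub> (s \<otimes>\<^bsub>G0\<^esub> t)) = \<phi> (Im_d #>\<^bsub>G0\<^esub> s) \<otimes>\<^bsub>G1\<^esub> act s (\<phi> (Im_d #>\<^bsub>G0\<^esub> t))"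
  by (simp add: carrier_Der_iff)

lemma Der_rcos_d:
  assumes \<phi>: "\<phi> \<in> carrier D" and a: "a \<in> carrier G1"
  shows "\<phi> (Im_d #>\<^bsub>G0\<^esub> d a) = \<one>\<^bsub>G1\<^esub>"
proof -
  have "\<phi> (Im_d #>\<^bsub>G0\<^esub> \<one>\<^bsub>G0\<^esub>) = \<one>\<^bsub>G1\<^esub>"
    using Der_cocycle[OF \<phi>, of "\<one>\<^bsub>G0\<^esub>" "\<one>\<^bsub>G0\<^esub>"] Der_in_Ker_d[OF \<phi>, of "\<one>\<^bsub>G0\<^esub>"]
    by (simp add: act_one_left)
  moreover have "Im_d #>\<^bsub>G0\<^esub> d a = Im_d #>\<^bsub>G0\<^esub> \<one>\<^bsub>G0\<^esub>"
    using rcos_d[OF a] rcos_d[OF G1.one_closed] by simp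
  ultimately show ?thesis by simp
qed

abbreviation Z :: "('b \<times> ('b \<Rightarrow> 'a)) monoid" where "Z \<equiv> Z0 G1 G0 d act"

lemma Z0_mult: "(x, \<xi>) \<otimes>\<^bsub>Z\<^esub> (y, \<eta>) = (x \<otimes>\<^bsub>G0\<^esub> y, \<lambda>t\<in>carrier G0. act x (\<eta> t) \<otimes>\<^bsub>G1\<^esub> \<xi> t)"
  by (simp add: Z0_def)

lemma Z0_one: "\<one>\<^bsub>Z\<^esub> = (\<one>\<^bsub>G0\<^esub>, \<lambda>t\<in>carrier G0. \<one>\<^bsub>G1\<^esub>)"
  by (simp add: Z0_def)

lemma Z0_memI:
  assumes "x \<in> carrier G0" and "\<And>t. t \<in> carrier G0 \<Longrightarrow> \<xi> t \<in> carrier G1"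
    and "\<xi> \<in> extensional (carrier G0)"
    and "\<And>t. t \<in> carrier G0 \<Longrightarrow>
           d (\<xi> t) = x \<otimes>\<^bsub>G0\<^esub> t \<otimes>\<^bsub>G0\<^esub> inv\<^bsub>G0\<^esub> x \<otimes>\<^bsub>G0\<^esub> inv\<^bsub>G0\<^esub> t"
    and "\<And>a. a \<in> carrier G1 \<Longrightarrow> \<xi> (d a) = act x a \<otimes>\<^bsub>G1\<^esub> inv\<^bsub>G1\<^esub> a"
    and "\<And>s t. s \<in> carrier G0 \<Longrightarrow> t \<in> carrier G0 \<Longrightarrow>
           \<xi> (s \<otimes>\<^bsub>G0\<^esub> t) = \<xi> s \<otimes>\<^bsub>G1\<^esub> act s (\<xi> t)"
  shows "(x, \<xi>) \<in> carrier Z"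
  using assms by (simp add: Z0_def)

context
  fixes x \<xi> assumes in_Z0: "(x, \<xi>) \<in> carrier Z"
begin

lemma Z0_fst_closed: "x \<in> carrier G0"
  using in_Z0 by (simp add: Z0_def)

lemma Z0_snd_closed: "t \<in> carrier G0 \<Longrightarrow> \<xi> t \<in> carrier G1"
  using in_Z0 by (auto simp: Z0_def)

lemma Z0_snd_extensional: "\<xi> \<in> extensional (carrier G0)"
  using in_Z0 by (simp add: Z0_def)

lemma Z0_d_snd: "t \<in> carrier G0 \<Longrightarrow>
    d (\<xi> t) = x \<otimes>\<^bsub>G0\<^esub> t \<otimes>\<^bsub>G0\<^esub> inv\<^bsub>G0\<^esub> x \<otimes>\<^bsub>G0\<^esub> inv\<^bsub>G0\<^esub> t"
  using in_Z0 by (simp add: Z0_def)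

lemma Z0_snd_d: "a \<in> carrier G1 \<Longrightarrow> \<xi> (d a) = act x a \<otimes>\<^bsub>G1\<^esub> inv\<^bsub>G1\<^esub> a"
  using in_Z0 by (simp add: Z0_def)

lemma Z0_snd_mult: "s \<in> carrier G0 \<Longrightarrow> t \<in> carrier G0 \<Longrightarrow>
    \<xi> (s \<otimes>\<^bsub>G0\<^esub> t) = \<xi> s \<otimes>\<^bsub>G1\<^esub> act s (\<xi> t)"
  using in_Z0 by (simp add: Z0_def)

text \<open>Since \<open>d (\<xi> s) = [x, s]\<close>, the Peiffer identity makes conjugation by \<open>\<xi> s\<close>
  turn the action of \<open>s\<close> into that of \<open>x s x\<inverse>\<close>.\<close>
lemma Z0_snd_conj:
  assumes s: "s \<in> carrier G0" and v: "v \<in> carrier G1"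
  shows "act (x \<otimes>\<^bsub>G0\<^esub> s \<otimes>\<^bsub>G0\<^esub> inv\<^bsub>G0\<^esub> x) v = \<xi> s \<otimes>\<^bsub>G1\<^esub> act s v \<otimes>\<^bsub>G1\<^esub> inv\<^bsub>G1\<^esub> (\<xi> s)"
proof -
  have "act (x \<otimes>\<^bsub>G0\<^esub> s \<otimes>\<^bsub>G0\<^esub> inv\<^bsub>G0\<^esub> x) v = act (d (\<xi> s)) (act s v)"
    using s v Z0_fst_closed by (simp add: Z0_d_snd act_act G0.m_assoc)
  also have "\<dots> = \<xi> s \<otimes>\<^bsub>G1\<^esub> act s v \<otimes>\<^bsub>G1\<^esub> inv\<^bsub>G1\<^esub> (\<xi> s)"
    using s v Z0_snd_closed by (simp add: act_d)
  finally show ?thesis .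
qed

end

lemma Z0_mult_closed:
  assumes A: "(x, \<xi>) \<in> carrier Z" and B: "(y, \<eta>) \<in> carrier Z"
  shows "(x, \<xi>) \<otimes>\<^bsub>Z\<^esub> (y, \<eta>) \<in> carrier Z"
proof -
  have [simp]: "x \<in> carrier G0" "y \<in> carrier G0" using A B by (simp_all add: Z0_fst_closed)
  have [simp]: "t \<in> carrier G0 \<Longrightarrow> \<xi> t \<in> carrier G1" "t \<in> carrier G0 \<Longrightarrow> \<eta> t \<in> carrier G1"
    for t using A B by (simp_all add: Z0_snd_closed)
  let ?\<zeta> = "\<lambda>t\<in>carrier G0. act x (\<eta> t) \<otimes>\<^bsub>G1\<^esub> \<xi> t"
  show ?thesis unfolding Z0_mult
  proof (rule Z0_memI)
    show "x \<otimes>\<^bsub>G0\<^esub> y \<in> carrier G0" "?\<zeta> \<in> extensional (carrier G0)"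
      "\<And>t. t \<in> carrier G0 \<Longrightarrow> ?\<zeta> t \<in> carrier G1" by simp_all
  next
    fix t assume t: "t \<in> carrier G0"
    show "d (?\<zeta> t) = x \<otimes>\<^bsub>G0\<^esub> y \<otimes>\<^bsub>G0\<^esub> t \<otimes>\<^bsub>G0\<^esub> inv\<^bsub>G0\<^esub> (x \<otimes>\<^bsub>G0\<^esub> y) \<otimes>\<^bsub>G0\<^esub> inv\<^bsub>G0\<^esub> t"
      using t by (simp add: d_mult d_act Z0_d_snd[OF A] Z0_d_snd[OF B] G0.m_assoc G0.inv_mult_group)
  next
    fix a assume a: "a \<in> carrier G1"
    show "?\<zeta> (d a) = act (x \<otimes>\<^bsub>G0\<^esub> y) a \<otimes>\<^bsub>G1\<^esub> inv\<^bsub>G1\<^esub> a"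
      using a by (simp add: Z0_snd_d[OF A] Z0_snd_d[OF B] act_mult act_inv act_act G1.m_assoc)
  next
    fix s t assume s: "s \<in> carrier G0" and t: "t \<in> carrier G0"
    have comm: "act x (act s (\<eta> t)) \<otimes>\<^bsub>G1\<^esub> \<xi> s = \<xi> s \<otimes>\<^bsub>G1\<^esub> act s (act x (\<eta> t))"
      using Z0_snd_conj[OF A s, of "act x (\<eta> t)"] s t by (simp add: act_act G0.m_assoc G1.m_assoc)
    have "act x (\<eta> (s \<otimes>\<^bsub>G0\<^esub> t)) \<otimes>\<^bsub>G1\<^esub> \<xi> (s \<otimes>\<^bsub>G0\<^esub> t)
        = act x (\<eta> s) \<otimes>\<^bsub>G1\<^esub> (act x (act s (\<eta> t)) \<otimes>\<^bsub>G1\<^esub> \<xi> s) \<otimes>\<^bsub>G1\<^esub> act s (\<xi> t)"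
      using s t by (simp add: Z0_snd_mult[OF A] Z0_snd_mult[OF B] act_mult G1.m_assoc)
    also have "\<dots> = act x (\<eta> s) \<otimes>\<^bsub>G1\<^esub> \<xi> s \<otimes>\<^bsub>G1\<^esub> act s (act x (\<eta> t) \<otimes>\<^bsub>G1\<^esub> \<xi> t)"
      unfolding comm using s t by (simp add: act_mult G1.m_assoc)
    finally show "?\<zeta> (s \<otimes>\<^bsub>G0\<^esub> t) = ?\<zeta> s \<otimes>\<^bsub>G1\<^esub> act s (?\<zeta> t)"
      using s t by simp
  qed
qed

lemma Z0_inv_closed:
  assumes A: "(x, \<xi>) \<in> carrier Z"
  shows "(inv\<^bsub>G0\<^esub> x, \<lambda>t\<in>carrier G0. act (inv\<^bsub>G0\<^esub> x) (inv\<^bsub>G1\<^esub> (\<xi> t))) \<in> carrier Z"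
proof -
  have x [simp]: "x \<in> carrier G0" "inv\<^bsub>G0\<^esub> x \<in> carrier G0"
    using A by (simp_all add: Z0_fst_closed)
  have [simp]: "t \<in> carrier G0 \<Longrightarrow> \<xi> t \<in> carrier G1" for t using A by (simp add: Z0_snd_closed)
  let ?\<zeta> = "\<lambda>t\<in>carrier G0. act (inv\<^bsub>G0\<^esub> x) (inv\<^bsub>G1\<^esub> (\<xi> t))"
  show ?thesis
  proof (rule Z0_memI)
    show "inv\<^bsub>G0\<^esub> x \<in> carrier G0" "?\<zeta> \<in> extensional (carrier G0)"
      "\<And>t. t \<in> carrier G0 \<Longrightarrow> ?\<zeta> t \<in> carrier G1" by simp_all
  next
    fix t assume t: "t \<in> carrier G0"
    show "d (?\<zeta> t) = inv\<^bsub>G0\<^esub> x \<otimes>\<^bsub>G0\<^esub> t \<otimes>\<^bsub>G0\<^esub> inv\<^bsub>G0\<^esub> (inv\<^bsub>G0\<^esub> x) \<otimes>\<^bsub>G0\<^esub> inv\<^bsub>G0\<^esub> t"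
      using t by (simp add: d_act d_inv Z0_d_snd[OF A] G0.m_assoc G0.inv_mult_group)
  next
    fix a assume a: "a \<in> carrier G1"
    show "?\<zeta> (d a) = act (inv\<^bsub>G0\<^esub> x) a \<otimes>\<^bsub>G1\<^esub> inv\<^bsub>G1\<^esub> a"
      using a by (simp add: Z0_snd_d[OF A] act_mult act_inv G1.inv_mult_group)
  next
    fix s t assume s: "s \<in> carrier G0" and t: "t \<in> carrier G0"
    define u where "u = inv\<^bsub>G1\<^esub> (\<xi> t)"
    have u: "u \<in> carrier G1" using t by (simp add: u_def)
    have comm: "act s u \<otimes>\<^bsub>G1\<^esub> inv\<^bsub>G1\<^esub> (\<xi> s) =
        inv\<^bsub>G1\<^esub> (\<xi> s) \<otimes>\<^bsub>G1\<^esub> act (x \<otimes>\<^bsub>G0\<^esub> s \<otimes>\<^bsub>G0\<^esub> inv\<^bsub>G0\<^esub> x) u"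
      using s u by (simp add: Z0_snd_conj[OF A] G1.m_assoc)
    have "act (inv\<^bsub>G0\<^esub> x) (inv\<^bsub>G1\<^esub> (\<xi> (s \<otimes>\<^bsub>G0\<^esub> t))) =
        act (inv\<^bsub>G0\<^esub> x) (act s u \<otimes>\<^bsub>G1\<^esub> inv\<^bsub>G1\<^esub> (\<xi> s))"
      using s t by (simp add: Z0_snd_mult[OF A] G1.inv_mult_group act_inv u_def)
    also have "\<dots> = act (inv\<^bsub>G0\<^esub> x) (inv\<^bsub>G1\<^esub> (\<xi> s)) \<otimes>\<^bsub>G1\<^esub> act s (act (inv\<^bsub>G0\<^esub> x) u)"
      unfolding comm using s u by (simp add: act_mult act_act[symmetric] G0.m_assoc)
    finally show "?\<zeta> (s \<otimes>\<^bsub>G0\<^esub> t) = ?\<zeta> s \<otimes>\<^bsub>G1\<^esub> act s (?\<zeta> t)"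
      using s t by (simp add: u_def)
  qed
qed

lemma Z0_group: "group Z"
proof (rule groupI)
  fix p q assume "p \<in> carrier Z" "q \<in> carrier Z"
  then show "p \<otimes>\<^bsub>Z\<^esub> q \<in> carrier Z"
    by (cases p, cases q) (simp only: Z0_mult_closed)
next
  show "\<one>\<^bsub>Z\<^esub> \<in> carrier Z"
    unfolding Z0_one by (rule Z0_memI) (simp_all add: act_one_left)
next
  fix p q r assume "p \<in> carrier Z" "q \<in> carrier Z" "r \<in> carrier Z"
  moreover obtain x \<xi> y \<eta> z \<zeta> where "p = (x, \<xi>)" "q = (y, \<eta>)" "r = (z, \<zeta>)"
    by (cases p, cases q, cases r)
  ultimately show "p \<otimes>\<^bsub>Z\<^esub> q \<otimes>\<^bsub>Z\<^esub> r = p \<otimes>\<^bsub>Z\<^esub> (q \<otimes>\<^bsub>Z\<^esub> r)"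
    by (auto simp: Z0_mult G0.m_assoc act_act act_mult G1.m_assoc Z0_fst_closed Z0_snd_closed
        intro!: restrict_ext)
next
  fix p assume p: "p \<in> carrier Z"
  obtain x \<xi> where p_eq: "p = (x, \<xi>)" by (cases p)
  show "\<one>\<^bsub>Z\<^esub> \<otimes>\<^bsub>Z\<^esub> p = p"
    using p unfolding p_eq Z0_one Z0_mult
    by (auto simp: act_one_left Z0_fst_closed Z0_snd_closed
        intro!: extensionalityI[OF _ Z0_snd_extensional])
  let ?q = "(inv\<^bsub>G0\<^esub> x, \<lambda>t\<in>carrier G0. act (inv\<^bsub>G0\<^esub> x) (inv\<^bsub>G1\<^esub> (\<xi> t)))"
  have "?q \<otimes>\<^bsub>Z\<^esub> p = \<one>\<^bsub>Z\<^esub>"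
    using p p_eq by (auto simp: Z0_one Z0_mult act_inv[symmetric] act_mult[symmetric]
        Z0_fst_closed Z0_snd_closed intro!: restrict_ext)
  then show "\<exists>q\<in>carrier Z. q \<otimes>\<^bsub>Z\<^esub> p = \<one>\<^bsub>Z\<^esub>"
    using Z0_inv_closed p p_eq by blast
qed

lemma z0_hom: "z0 \<in> hom Z G0"
proof (rule homI)
  fix p assume "p \<in> carrier Z"
  then show "z0 p \<in> carrier G0" by (cases p) (simp add: z0_def Z0_fst_closed)
next
  fix p q assume "p \<in> carrier Z" "q \<in> carrier Z"
  then show "z0 (p \<otimes>\<^bsub>Z\<^esub> q) = z0 p \<otimes>\<^bsub>G0\<^esub> z0 q"
    by (cases p, cases q) (simp add: z0_def Z0_mult)
qed

lemma der_to_Z0_in_kernel: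
  assumes \<phi>: "\<phi> \<in> carrier D"
  shows "der_to_Z0 G1 G0 d \<phi> \<in> kernel Z G0 z0"
proof -
  let ?\<xi> = "\<lambda>t\<in>carrier G0. \<phi> (Im_d #>\<^bsub>G0\<^esub> t)"
  have "(\<one>\<^bsub>G0\<^esub>, ?\<xi>) \<in> carrier Z"
  proof (rule Z0_memI)
    fix t assume t: "t \<in> carrier G0"
    then show "?\<xi> t \<in> carrier G1"
      and "d (?\<xi> t) = \<one>\<^bsub>G0\<^esub> \<otimes>\<^bsub>G0\<^esub> t \<otimes>\<^bsub>G0\<^esub> inv\<^bsub>G0\<^esub> \<one>\<^bsub>G0\<^esub> \<otimes>\<^bsub>G0\<^esub> inv\<^bsub>G0\<^esub> t"
      using Der_in_Ker_d[OF \<phi> t] by (simp_all add: Ker_d_iff)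
  next
    fix a assume "a \<in> carrier G1"
    then show "?\<xi> (d a) = act \<one>\<^bsub>G0\<^esub> a \<otimes>\<^bsub>G1\<^esub> inv\<^bsub>G1\<^esub> a"
      by (simp add: Der_rcos_d[OF \<phi>] act_one_left)
  next
    fix s t assume "s \<in> carrier G0" "t \<in> carrier G0"
    then show "?\<xi> (s \<otimes>\<^bsub>G0\<^esub> t) = ?\<xi> s \<otimes>\<^bsub>G1\<^esub> act s (?\<xi> t)"
      by (simp add: Der_cocycle[OF \<phi>])
  qed simp_all
  then show ?thesis unfolding kernel_def der_to_Z0_def z0_def by simp
qed

lemma kernel_z0_snd:
  assumes A: "(\<one>\<^bsub>G0\<^esub>, \<xi>) \<in> carrier Z" and t: "t \<in> carrier G0"
  shows "\<xi> t \<in> Ker_d" and "h \<in> Im_d \<Longrightarrow> \<xi> (h \<otimes>\<^bsub>G0\<^esub> t) = \<xi> t"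
proof -
  show \<xi>t: "\<xi> t \<in> Ker_d" using A t by (simp add: Ker_d_iff Z0_d_snd Z0_snd_closed)
  assume "h \<in> Im_d"
  then obtain a where a: "a \<in> carrier G1" "h = d a" by blast
  have "\<xi> (d a) = \<one>\<^bsub>G1\<^esub>" using A a by (simp add: Z0_snd_d act_one_left)
  then show "\<xi> (h \<otimes>\<^bsub>G0\<^esub> t) = \<xi> t"
    using A a t \<xi>t by (simp add: Z0_snd_mult act_d_Ker_d)
qed

lemma kernel_z0_subset_image: "kernel Z G0 z0 \<subseteq> der_to_Z0 G1 G0 d ` carrier D"
proof
  fix p assume "p \<in> kernel Z G0 z0"
  then obtain \<xi> where p: "p = (\<one>\<^bsub>G0\<^esub>, \<xi>)" and A: "(\<one>\<^bsub>G0\<^esub>, \<xi>) \<in> carrier Z"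
    by (cases p) (auto simp: kernel_def z0_def)
  define \<phi> where "\<phi> = (\<lambda>q\<in>carrier Pi0. \<xi> (SOME y. y \<in> q))"
  have \<phi>_rcos: "\<phi> (Im_d #>\<^bsub>G0\<^esub> t) = \<xi> t" if t: "t \<in> carrier G0" for t
  proof -
    obtain h where "h \<in> Im_d" "(SOME y. y \<in> Im_d #>\<^bsub>G0\<^esub> t) = h \<otimes>\<^bsub>G0\<^esub> t"
      using G0.some_rcos_rep[OF Im_d_subgroup t] .
    then show ?thesis using kernel_z0_snd[OF A t] t by (simp add: \<phi>_def)
  qed
  have "\<phi> \<in> carrier Pi0 \<rightarrow> Ker_d"
    using \<phi>_rcos kernel_z0_snd(1)[OF A] by (auto simp: carrier_Pi0)
  then have "\<phi> \<in> carrier D"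
    using \<phi>_rcos Z0_snd_mult[OF A] by (simp add: carrier_Der_iff \<phi>_def)
  moreover have "der_to_Z0 G1 G0 d \<phi> = p"
    using A \<phi>_rcos unfolding p der_to_Z0_def
    by (auto intro!: extensionalityI[OF _ Z0_snd_extensional])
  ultimately show "p \<in> der_to_Z0 G1 G0 d ` carrier D" by blast
qed

lemma image_der_to_Z0: "der_to_Z0 G1 G0 d ` carrier D = kernel Z G0 z0"
  using der_to_Z0_in_kernel kernel_z0_subset_image by blast

lemma inj_on_der_to_Z0: "inj_on (der_to_Z0 G1 G0 d) (extensional (carrier Pi0))"
proof (rule inj_onI)
  fix \<phi> \<psi> assume \<phi>: "\<phi> \<in> extensional (carrier Pi0)" and \<psi>: "\<psi> \<in> extensional (carrier Pi0)"
    and eq: "der_to_Z0 G1 G0 d \<phi> = der_to_Z0 G1 G0 d \<psi>"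
  have "\<phi> (Im_d #>\<^bsub>G0\<^esub> t) = \<psi> (Im_d #>\<^bsub>G0\<^esub> t)" if "t \<in> carrier G0" for t
    using fun_cong[OF arg_cong[OF eq, of snd], of t] that by (simp add: der_to_Z0_def)
  then show "\<phi> = \<psi>"
    using \<phi> \<psi> by (auto simp: carrier_Pi0 intro!: extensionalityI)
qed

lemma der_to_Z0_mult:
  assumes "\<phi> \<in> carrier D" "\<psi> \<in> carrier D"
  shows "der_to_Z0 G1 G0 d (\<phi> \<otimes>\<^bsub>D\<^esub> \<psi>) = der_to_Z0 G1 G0 d \<phi> \<otimes>\<^bsub>Z\<^esub> der_to_Z0 G1 G0 d \<psi>"
  unfolding der_to_Z0_def Z0_mult
  using Der_in_Ker_d[OF assms(1)] Der_in_Ker_d[OF assms(2)]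
  by (auto simp: Der_def act_one_left Ker_d_central intro!: restrict_ext)

lemma der_to_Z0_hom: "der_to_Z0 G1 G0 d \<in> hom D Z"
  using der_to_Z0_in_kernel der_to_Z0_mult by (auto simp: kernel_def intro: homI)

lemma Der_group: "group D"
proof (rule group_if_inj_onto_subgroup[OF Z0_group _ inj_on_der_to_Z0])
  show "subgroup (kernel Z G0 z0) Z"
    using group_hom.subgroup_kernel z0_hom Z0_group G0.is_group
    by (auto simp: group_hom_def group_hom_axioms_def)
  show "der_to_Z0 G1 G0 d \<one>\<^bsub>D\<^esub> = \<one>\<^bsub>Z\<^esub>"
    by (auto simp: Der_def der_to_Z0_def Z0_one intro!: restrict_ext)
  show "carrier D \<subseteq> extensional (carrier Pi0)"
    using Der_extensional by blast
  show "\<phi> \<otimes>\<^bsub>D\<^esub> \<psi> \<in> extensional (carrier Pi0)" "\<one>\<^bsub>D\<^esub> \<in> extensional (carrier Pi0)" for \<phi> \<psi>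
    by (simp_all add: Der_def)
qed (simp_all add: der_to_Z0_mult image_der_to_Z0)

end

theorem lemma3p5:
  fixes G1 :: "'a monoid" and G0 :: "'b monoid"
    and d :: "'a \<Rightarrow> 'b" and act :: "'b \<Rightarrow> 'a \<Rightarrow> 'a"
  assumes "crossed_module G1 G0 d act"
  shows "group (Der G1 G0 d act) \<and> group (Z0 G1 G0 d act) \<and>
         der_to_Z0 G1 G0 d \<in> hom (Der G1 G0 d act) (Z0 G1 G0 d act) \<and>
         z0 \<in> hom (Z0 G1 G0 d act) G0 \<and>
         inj_on (der_to_Z0 G1 G0 d) (carrier (Der G1 G0 d act)) \<and>
         der_to_Z0 G1 G0 d ` carrier (Der G1 G0 d act) = kernel (Z0 G1 G0 d act) G0 z0"
proof -
  interpret xmod G1 G0 d act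
    using assms by (rule crossed_module_imp_xmod)
  have "inj_on (der_to_Z0 G1 G0 d) (carrier D)"
    using inj_on_der_to_Z0 Der_extensional by (blast intro: inj_on_subset)
  then show ?thesis
    using Der_group Z0_group der_to_Z0_hom z0_hom image_der_to_Z0 by blast
qed

end
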